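(* Suppose $\mathit{Act}$ is infinite. Then $\mathcal{E}_v'$ is complete for $\simeq_\omega$ over open monitors: for all monitors $m,n$, if $m\simeq_\omega n$ then $\mathcal{E}_v'\vdash m=n$.
   Context: Monitors: terms $m,n ::= v \mid a.m \mid m+n \mid x$ over an action set $\mathit{Act}$ and variables $x$, verdicts $v::=\mathit{end}\mid\mathit{yes}\mid\mathit{no}$; closed monitors contain no variables. Transitions $\xrightarrow{\alpha}$, $\alpha\in\mathit{Act}\cup\{\tau\}$ ($\tau\notin\mathit{Act}$): least relation with $a.m\xrightarrow{a}m$; $m\xrightarrow{\alpha}m'$ implies $m+n\xrightarrow{\alpha}m'$ and $n+m\xrightarrow{\alpha}m'$; $v\xrightarrow{\alpha}v$ for each verdict $v$. Weak transitions: $m\xRightarrow{\varepsilon}m'$ iff $m(\xrightarrow{\tau})^*m'$; $m\xRightarrow{a}m'$ iff $m\xRightarrow{\varepsilon}\xrightarrow{a}\xRightarrow{\varepsilon}m'$; $m\xRightarrow{as'}m'$ ($s'\neq\varepsilon$) iff $m\xRightarrow{a}m_1\xRightarrow{s'}m'$. For closed $m$: $L_a(m)=\{s\mid m\xRightarrow{s}\mathit{yes}\}$, $L_r(m)=\{s\mid m\xRightarrow{s}\mathit{no}\}$; closed $m\simeq_\omega n$ iff $L_a(m)\cdot\mathit{Act}^\omega=L_a(n)\cdot\mathit{Act}^\omega$ and $L_r(m)\cdot\mathit{Act}^\omega=L_r(n)\cdot\mathit{Act}^\omega$; for open monitors $m\simeq_\omega n$ iff $\sigma(m)\simeq_\omega\sigma(n)$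 for all closed substitutions $\sigma$. $\mathcal{E}\vdash m=n$ denotes derivability by the rules of equational logic. $\mathcal{E}_v'$ consists of (A1) $x+y=y+x$; (A2) $x+(y+z)=(x+y)+z$; (A3) $x+x=x$; (A4) $x+\mathit{end}=x$; for each $a\in\mathit{Act}$: ($E_a$) $a.\mathit{end}=\mathit{end}$; ($Y_a$) $\mathit{yes}=\mathit{yes}+a.\mathit{yes}$; ($N_a$) $\mathit{no}=\mathit{no}+a.\mathit{no}$; ($D_a$) $a.(x+y)=a.x+a.y$; and (O1) $\mathit{yes}+\mathit{no}=\mathit{yes}+\mathit{no}+x$. *)

theory Defs
  imports Main
begin

datatype ('a, 'x) mon =
    End | Yes | No
  | Pre 'a "('a, 'x) mon"
  | Sum "('a, 'x) mon" "('a, 'x) mon"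
  | Var 'x

fun is_verdict :: "('a, 'x) mon \<Rightarrow> bool" where
  "is_verdict End = True"
| "is_verdict Yes = True"
| "is_verdict No = True"
| "is_verdict _ = False"

fun vars :: "('a, 'x) mon \<Rightarrow> 'x set" where
  "vars (Pre a m) = vars m"
| "vars (Sum m n) = vars m \<union> vars n"
| "vars (Var x) = {x}"
| "vars _ = {}"

definition closed :: "('a, 'x) mon \<Rightarrow> bool" where
  "closed m \<longleftrightarrow> vars m = {}"

fun subst :: "('x \<Rightarrow> ('a, 'x) mon) \<Rightarrow> ('a, 'x) mon \<Rightarrow> ('a, 'x) mon" where
  "subst \<sigma> (Pre a m) = Pre a (subst \<sigma> m)"
| "subst \<sigma> (Sum m n) = Sum (subst \<sigma> m) (subst \<sigma> n)"
| "subst \<sigma> (Var x) = \<sigma> x"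
| "subst \<sigma> End = End"
| "subst \<sigma> Yes = Yes"
| "subst \<sigma> No = No"

text \<open>Labels: Some a is the action a, None is tau.\<close>
inductive step :: "('a, 'x) mon \<Rightarrow> 'a option \<Rightarrow> ('a, 'x) mon \<Rightarrow> bool" where
  step_pre: "step (Pre a m) (Some a) m"
| step_sumL: "step m \<alpha> m' \<Longrightarrow> step (Sum m n) \<alpha> m'"
| step_sumR: "step m \<alpha> m' \<Longrightarrow> step (Sum n m) \<alpha> m'"
| step_verd: "is_verdict v \<Longrightarrow> step v \<alpha> v"

definition tau_star :: "('a, 'x) mon \<Rightarrow> ('a, 'x) mon \<Rightarrow> bool" where
  "tau_star = (\<lambda>m m'. step m None m')\<^sup>*\<^sup>*"

inductive wtrace :: "('a, 'x) mon \<Rightarrow> 'a list \<Rightarrow> ('a, 'x) mon \<Rightarrow> bool" where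
  wt_eps: "tau_star m m' \<Longrightarrow> wtrace m [] m'"
| wt_cons: "tau_star m m1 \<Longrightarrow> step m1 (Some a) m2 \<Longrightarrow> tau_star m2 m3 \<Longrightarrow>
            (s = [] \<Longrightarrow> m' = m3) \<Longrightarrow> (s \<noteq> [] \<Longrightarrow> wtrace m3 s m') \<Longrightarrow>
            wtrace m (a # s) m'"

definition La :: "('a, 'x) mon \<Rightarrow> 'a list set" where
  "La m = {s. wtrace m s Yes}"

definition Lr :: "('a, 'x) mon \<Rightarrow> 'a list set" where
  "Lr m = {s. wtrace m s No}"

text \<open>L \<cdot> Act^omega, infinite words as functions nat \<Rightarrow> 'a.\<close>
definition omega_ext :: "'a list set \<Rightarrow> (nat \<Rightarrow> 'a) set" where
  "omega_ext L = {w. \<exists>s\<in>L. \<exists>w'. w = (\<lambda>i. if i < length s then s ! i else w' (i - length s))}"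

definition omega_eq_closed :: "('a, 'x) mon \<Rightarrow> ('a, 'x) mon \<Rightarrow> bool" where
  "omega_eq_closed m n \<longleftrightarrow>
     omega_ext (La m) = omega_ext (La n) \<and> omega_ext (Lr m) = omega_ext (Lr n)"

definition omega_eq :: "('a, 'x) mon \<Rightarrow> ('a, 'x) mon \<Rightarrow> bool" where
  "omega_eq m n \<longleftrightarrow>
     (\<forall>\<sigma>. (\<forall>x. closed (\<sigma> x)) \<longrightarrow> omega_eq_closed (subst \<sigma> m) (subst \<sigma> n))"

text \<open>Derivability in equational logic from E_v'. Axioms are given as schemas
  over arbitrary monitors (= all substitution instances of the axioms).\<close>
inductive Ev_derives :: "('a, 'x) mon \<Rightarrow> ('a, 'x) mon \<Rightarrow> bool" where
  A1: "Ev_derives (Sum x y) (Sum y x)"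
| A2: "Ev_derives (Sum x (Sum y z)) (Sum (Sum x y) z)"
| A3: "Ev_derives (Sum x x) x"
| A4: "Ev_derives (Sum x End) x"
| Ea: "Ev_derives (Pre a End) End"
| Ya: "Ev_derives Yes (Sum Yes (Pre a Yes))"
| Na: "Ev_derives No (Sum No (Pre a No))"
| Da: "Ev_derives (Pre a (Sum x y)) (Sum (Pre a x) (Pre a y))"
| O1: "Ev_derives (Sum Yes No) (Sum (Sum Yes No) x)"
| refl: "Ev_derives m m"
| sym: "Ev_derives m n \<Longrightarrow> Ev_derives n m"
| trans: "Ev_derives m n \<Longrightarrow> Ev_derives n k \<Longrightarrow> Ev_derives m k"
| cong_pre: "Ev_derives m n \<Longrightarrow> Ev_derives (Pre a m) (Pre a n)"
| cong_sum: "Ev_derives m1 n1 \<Longrightarrow> Ev_derives m2 n2 \<Longrightarrow> Ev_derives (Sum m1 m2) (Sum n1 n2)"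

end

theory Submission
  imports Defs
begin

text \<open>Write \<open>m \<sqsupseteq> n\<close> (\<open>absorbs m n\<close>) for \<open>\<turnstile> m = m + n\<close>. As \<open>Act\<close> is
  infinite, some action \<open>c\<close> occurs in neither \<open>m\<close> nor \<open>n\<close>. Derivably \<open>m \<sqsupseteq> n\<close> holds
  as soon as every path of \<open>n\<close> to \<open>yes\<close> or \<open>no\<close> is one of \<open>m\<close>, and every path
  of \<open>n\<close> to a variable \<open>x\<close> is either a path of \<open>m\<close> to \<open>x\<close> or one along which
  \<open>m\<close> reaches both \<open>yes\<close> and \<open>no\<close>, after which (O1) absorbs anything. Both
  conditions follow from \<open>m \<simeq>\<^sub>\<omega> n\<close> by testing closed instances on the word
  \<open>s c c c \<dots>\<close>: substituting \<open>end\<close> for every variable gives the first,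
  substituting \<open>c.v\<close> for \<open>x\<close> the second. Since \<open>c\<close> is fresh, \<open>m\<close> cannot
  match such a test through any other part of its syntax. Applying this in both directions
  gives \<open>\<turnstile> m = n\<close>.\<close>

section \<open>Weak traces as syntactic paths\<close>

text \<open>A verdict reached before the end of \<open>s\<close> absorbs the remaining actions.\<close>
fun verdict_path :: "('a,'x) mon \<Rightarrow> ('a,'x) mon \<Rightarrow> 'a list \<Rightarrow> bool" where
  "verdict_path v Yes s \<longleftrightarrow> v = Yes"
| "verdict_path v No s \<longleftrightarrow> v = No"
| "verdict_path v End s \<longleftrightarrow> False"
| "verdict_path v (Var x) s \<longleftrightarrow> False"
| "verdict_path v (Pre a k) [] \<longleftrightarrow> False"
| "verdict_path v (Pre a k) (b # s) \<longleftrightarrow> a = b \<and> verdict_path v k s"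
| "verdict_path v (Sum k1 k2) s \<longleftrightarrow> verdict_path v k1 s \<or> verdict_path v k2 s"

fun var_path :: "('a,'x) mon \<Rightarrow> 'x \<Rightarrow> 'a list \<Rightarrow> bool" where
  "var_path (Var y) x s \<longleftrightarrow> y = x \<and> s = []"
| "var_path (Pre a k) x [] \<longleftrightarrow> False"
| "var_path (Pre a k) x (b # s) \<longleftrightarrow> a = b \<and> var_path k x s"
| "var_path (Sum k1 k2) x s \<longleftrightarrow> var_path k1 x s \<or> var_path k2 x s"
| "var_path _ x s \<longleftrightarrow> False"

lemma verdict_path_imp_verdict: "verdict_path v k s \<Longrightarrow> v = Yes \<or> v = No"
proof (induction k arbitrary: s)
  case (Pre a k)
  then show ?case by (cases s) auto
qed auto

lemma verdict_path_step_tau: "step k None k' \<Longrightarrow> verdict_path v k' s \<Longrightarrow> verdict_path v k s"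
  by (induction k "None :: 'a option" k' rule: step.induct) auto

lemma verdict_path_step_action:
  "step k (Some a) k' \<Longrightarrow> verdict_path v k' s \<Longrightarrow> verdict_path v k (a # s)"
  by (induction k "Some a" k' rule: step.induct) (auto elim: is_verdict.elims)

lemma verdict_path_tau_star: "tau_star k k' \<Longrightarrow> verdict_path v k' s \<Longrightarrow> verdict_path v k s"
  unfolding tau_star_def
  by (induction rule: converse_rtranclp_induct) (auto intro: verdict_path_step_tau)

lemma wtrace_imp_verdict_path:
  "wtrace k s v \<Longrightarrow> v = Yes \<or> v = No \<Longrightarrow> verdict_path v k s"
proof (induction rule: wtrace.induct)
  case (wt_eps m m')
  then show ?case by (auto intro: verdict_path_tau_star)
next
  case (wt_cons m m1 a m2 m3 s m')
  then have "verdict_path m' m3 s"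
    by (cases "s = []") (auto intro: verdict_path_tau_star)
  then show ?case
    using wt_cons by (auto intro: verdict_path_tau_star verdict_path_step_action)
qed

lemma verdict_path_Nil_step: "verdict_path v k [] \<Longrightarrow> step k None v"
  by (induction k) (auto intro: step.intros)

lemma verdict_path_Cons_step:
  "verdict_path v k (a # s) \<Longrightarrow> \<exists>k'. step k (Some a) k' \<and> verdict_path v k' s"
proof (induction k)
  case Yes
  then show ?case using step_verd[of Yes] by force
next
  case No
  then show ?case using step_verd[of No] by force
qed (auto intro: step.intros)

lemma wtrace_step_action:
  assumes "step k (Some a) k'" and "wtrace k' s v"
  shows "wtrace k (a # s) v"
proof (cases "s = []")
  case True
  with assms(2) have "tau_star k' v" by (auto elim: wtrace.cases)
  with assms(1) True show ?thesis by (auto intro: wt_cons simp: tau_star_def)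
next
  case False
  with assms show ?thesis by (auto intro: wt_cons simp: tau_star_def)
qed

lemma verdict_path_imp_wtrace: "verdict_path v k s \<Longrightarrow> wtrace k s v"
proof (induction s arbitrary: k)
  case Nil
  then have "step k None v" by (rule verdict_path_Nil_step)
  then show ?case by (simp add: wt_eps tau_star_def r_into_rtranclp)
next
  case (Cons a s)
  then show ?case using verdict_path_Cons_step by (metis wtrace_step_action)
qed

lemma wtrace_iff_verdict_path: "v = Yes \<or> v = No \<Longrightarrow> wtrace k s v \<longleftrightarrow> verdict_path v k s"
  using wtrace_imp_verdict_path verdict_path_imp_wtrace by blast

section \<open>Derivable absorption\<close>

declare Ev_derives.trans[trans]

abbreviation absorbs :: "('a,'x) mon \<Rightarrow> ('a,'x) mon \<Rightarrow> bool" where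
  "absorbs m n \<equiv> Ev_derives m (Sum m n)"

lemma absorbs_refl: "absorbs m m"
  by (rule Ev_derives.sym, rule A3)

lemma absorbs_trans:
  assumes "absorbs m n" and "absorbs n k"
  shows "absorbs m k"
proof -
  have "Ev_derives m (Sum m n)" by (rule assms(1))
  also have "Ev_derives \<dots> (Sum m (Sum n k))" by (rule cong_sum[OF Ev_derives.refl assms(2)])
  also have "Ev_derives \<dots> (Sum (Sum m n) k)" by (rule A2)
  also have "Ev_derives \<dots> (Sum m k)" by (rule cong_sum[OF Ev_derives.sym[OF assms(1)] Ev_derives.refl])
  finally show ?thesis .
qed

lemma absorbs_Sum_left: "absorbs (Sum m n) m"
proof -
  have "Ev_derives (Sum m n) (Sum (Sum m m) n)" by (rule cong_sum[OF Ev_derives.sym[OF A3] Ev_derives.refl])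
  also have "Ev_derives \<dots> (Sum m (Sum m n))" by (rule Ev_derives.sym[OF A2])
  also have "Ev_derives \<dots> (Sum (Sum m n) m)" by (rule A1)
  finally show ?thesis .
qed

lemma absorbs_Sum_right: "absorbs (Sum m n) n"
proof -
  have "Ev_derives (Sum m n) (Sum m (Sum n n))" by (rule cong_sum[OF Ev_derives.refl Ev_derives.sym[OF A3]])
  also have "Ev_derives \<dots> (Sum (Sum m n) n)" by (rule A2)
  finally show ?thesis .
qed

lemma absorbs_Sum:
  assumes "absorbs m n" and "absorbs m k"
  shows "absorbs m (Sum n k)"
proof -
  have "Ev_derives m (Sum m k)" by (rule assms(2))
  also have "Ev_derives \<dots> (Sum (Sum m n) k)" by (rule cong_sum[OF assms(1) Ev_derives.refl])
  also have "Ev_derives \<dots> (Sum m (Sum n k))" by (rule Ev_derives.sym[OF A2])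
  finally show ?thesis .
qed

lemma absorbs_Pre: "absorbs m n \<Longrightarrow> absorbs (Pre a m) (Pre a n)"
  by (rule Ev_derives.trans[OF cong_pre Da])

lemma absorbs_End: "absorbs m End"
  by (rule Ev_derives.sym, rule A4)

lemma Ev_derives_imp_absorbs: "Ev_derives m n \<Longrightarrow> absorbs m n"
  by (rule Ev_derives.trans[OF Ev_derives.sym[OF A3] cong_sum[OF Ev_derives.refl]])

lemma absorbs_antisym:
  assumes "absorbs m n" and "absorbs n m"
  shows "Ev_derives m n"
proof -
  have "Ev_derives m (Sum m n)" by (rule assms(1))
  also have "Ev_derives \<dots> (Sum n m)" by (rule A1)
  also have "Ev_derives \<dots> n" by (rule Ev_derives.sym[OF assms(2)])
  finally show ?thesis .
qed

definition prefixes :: "'a list \<Rightarrow> ('a,'x) mon \<Rightarrow> ('a,'x) mon" where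
  "prefixes s k = foldr Pre s k"

lemma prefixes_simps [simp]:
  "prefixes [] k = k"
  "prefixes (a # s) k = Pre a (prefixes s k)"
  "prefixes (s @ t) k = prefixes s (prefixes t k)"
  by (simp_all add: prefixes_def)

lemma prefixes_End: "Ev_derives (prefixes s End) End"
  by (induction s) (auto intro: Ev_derives.refl Ev_derives.trans[OF cong_pre Ea])

lemma prefixes_Sum: "Ev_derives (prefixes s (Sum k1 k2)) (Sum (prefixes s k1) (prefixes s k2))"
  by (induction s) (auto intro: Ev_derives.refl Ev_derives.trans[OF cong_pre Da])

lemma absorbs_prefixes: "absorbs k k' \<Longrightarrow> absorbs (prefixes s k) (prefixes s k')"
  by (induction s) (auto intro: absorbs_Pre)

lemma verdict_absorbs_prefixes: "v = Yes \<or> v = No \<Longrightarrow> absorbs v (prefixes s v)"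
proof (induction s)
  case Nil
  then show ?case using absorbs_refl by simp
next
  case (Cons a s)
  then have "absorbs v (Pre a v)" using Ya[of a] Na[of a] by auto
  moreover have "absorbs (Pre a v) (Pre a (prefixes s v))" using Cons by (auto intro: absorbs_Pre)
  ultimately show ?case by (auto intro: absorbs_trans)
qed

lemma verdict_path_absorbs: "verdict_path v m s \<Longrightarrow> absorbs m (prefixes s v)"
proof (induction m arbitrary: s)
  case (Pre a m)
  then show ?case by (cases s) (auto intro: absorbs_Pre)
next
  case (Sum m1 m2)
  then show ?case by (auto intro: absorbs_trans[OF absorbs_Sum_left] absorbs_trans[OF absorbs_Sum_right])
qed (auto intro: verdict_absorbs_prefixes)

lemma absorbs_Sum_prefixes:
  "absorbs m (Sum (prefixes s k1) (prefixes s k2)) \<Longrightarrow> absorbs m (prefixes s (Sum k1 k2))"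
  using absorbs_trans Ev_derives_imp_absorbs[OF Ev_derives.sym[OF prefixes_Sum]] by blast

lemma conflicting_verdicts_absorb:
  assumes "verdict_path Yes m s" and "verdict_path No m s"
  shows "absorbs m (prefixes s k)"
proof -
  have "absorbs m (prefixes s (Sum Yes No))"
    using assms by (auto intro: absorbs_Sum_prefixes absorbs_Sum verdict_path_absorbs)
  then show ?thesis using absorbs_trans absorbs_prefixes[OF O1] by blast
qed

lemma var_path_absorbs: "var_path m x s \<Longrightarrow> absorbs m (prefixes s (Var x))"
proof (induction m arbitrary: s)
  case (Pre a m)
  then show ?case by (cases s) (auto intro: absorbs_Pre)
next
  case (Sum m1 m2)
  then show ?case by (auto intro: absorbs_trans[OF absorbs_Sum_left] absorbs_trans[OF absorbs_Sum_right])
qed (auto intro: absorbs_refl)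

lemma absorbs_prefixes_if_paths_covered:
  assumes "\<And>v s. verdict_path v n s \<Longrightarrow> verdict_path v m (s0 @ s)"
    and "\<And>x s. var_path n x s \<Longrightarrow>
      var_path m x (s0 @ s) \<or> verdict_path Yes m (s0 @ s) \<and> verdict_path No m (s0 @ s)"
  shows "absorbs m (prefixes s0 n)"
  using assms
proof (induction n arbitrary: s0)
  case End
  have "absorbs End (prefixes s0 End)"
    by (rule Ev_derives_imp_absorbs[OF Ev_derives.sym[OF prefixes_End]])
  then show ?case by (rule absorbs_trans[OF absorbs_End])
next
  case Yes
  then show ?case using Yes.prems(1)[of Yes "[]"] verdict_path_absorbs by simp
next
  case No
  then show ?case using No.prems(1)[of No "[]"] verdict_path_absorbs by simp
next
  case (Var x)
  then show ?case using var_path_absorbs[of m x s0] conflicting_verdicts_absorb[of m s0] by fastforce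
next
  case (Pre a n)
  then show ?case using Pre.IH[of "s0 @ [a]"] by simp
next
  case (Sum n1 n2)
  have "absorbs m (prefixes s0 n1)" and "absorbs m (prefixes s0 n2)"
    by (rule Sum.IH; use Sum.prems in auto)+
  then show ?case by (auto intro: absorbs_Sum_prefixes absorbs_Sum)
qed

corollary absorbs_if_paths_covered:
  assumes "\<And>v s. verdict_path v n s \<Longrightarrow> verdict_path v m s"
    and "\<And>x s. var_path n x s \<Longrightarrow> var_path m x s \<or> verdict_path Yes m s \<and> verdict_path No m s"
  shows "absorbs m n"
  using absorbs_prefixes_if_paths_covered[of n m "[]"] assms by simp

section \<open>Fresh actions and the \<omega>-semantics\<close>

fun acts :: "('a,'x) mon \<Rightarrow> 'a set" where
  "acts (Pre a k) = insert a (acts k)"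
| "acts (Sum k1 k2) = acts k1 \<union> acts k2"
| "acts _ = {}"

lemma finite_acts: "finite (acts m)"
  by (induction m) auto

lemma var_path_acts: "var_path m x u \<Longrightarrow> set u \<subseteq> acts m"
proof (induction m arbitrary: u)
  case (Pre a m)
  then show ?case by (cases u) auto
qed auto

lemma verdict_path_append: "verdict_path v k u \<Longrightarrow> verdict_path v k (u @ t)"
  by (induction k arbitrary: u) (auto elim: verdict_path.elims)

lemma verdict_path_before_fresh:
  "verdict_path v k (u @ c # t) \<Longrightarrow> c \<notin> acts k \<Longrightarrow> verdict_path v k u"
proof (induction k arbitrary: u)
  case (Pre a k)
  then show ?case by (cases u) auto
qed auto

lemma verdict_path_subst:
  "verdict_path v m s \<Longrightarrow> verdict_path v (subst \<sigma> m) s"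
proof (induction m arbitrary: s)
  case (Pre a m)
  then show ?case by (cases s) auto
qed auto

lemma var_path_subst:
  "var_path m x u \<Longrightarrow> verdict_path v (\<sigma> x) t \<Longrightarrow> verdict_path v (subst \<sigma> m) (u @ t)"
proof (induction m arbitrary: u)
  case (Pre a m)
  then show ?case by (cases u) auto
qed auto

lemma verdict_path_substD:
  "verdict_path v (subst \<sigma> m) s \<Longrightarrow>
   verdict_path v m s \<or> (\<exists>x u t. s = u @ t \<and> var_path m x u \<and> verdict_path v (\<sigma> x) t)"
proof (induction m arbitrary: s)
  case (Var x)
  then show ?case by (intro disjI2 exI[of _ x] exI[of _ "[]"] exI[of _ s]) simp
next
  case (Pre a m)
  then show ?case by (cases s) (auto, metis Cons_eq_appendI var_path.simps(3))
next
  case (Sum m1 m2)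
  then show ?case by (metis subst.simps(2) var_path.simps(4) verdict_path.simps(7))
qed auto

lemma omega_ext_iff_prefix: "w \<in> omega_ext L \<longleftrightarrow> (\<exists>j. map w [0..<j] \<in> L)"
proof
  assume "w \<in> omega_ext L"
  then obtain s w' where "s \<in> L" and w: "w = (\<lambda>i. if i < length s then s ! i else w' (i - length s))"
    unfolding omega_ext_def by blast
  moreover have "map w [0..<length s] = s" by (rule nth_equalityI) (auto simp: w)
  ultimately show "\<exists>j. map w [0..<j] \<in> L" by metis
next
  assume "\<exists>j. map w [0..<j] \<in> L"
  then obtain j where j: "map w [0..<j] \<in> L" by blast
  have "w = (\<lambda>i. if i < length (map w [0..<j]) then map w [0..<j] ! i
                    else w (i - length (map w [0..<j]) + j))"
    by auto
  with j show "w \<in> omega_ext L"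
    unfolding omega_ext_def by (intro CollectI bexI[OF _ j] exI[of _ "\<lambda>i. w (i + j)"])
qed

lemma omega_eq_sym: "omega_eq m n \<Longrightarrow> omega_eq n m"
  unfolding omega_eq_def omega_eq_closed_def by metis

lemma omega_eq_prefix_transfer:
  assumes "omega_eq m n" and "\<forall>x. closed (\<sigma> x)" and "v = Yes \<or> v = No"
    and "verdict_path v (subst \<sigma> n) (map w [0..<j])"
  shows "\<exists>j'. verdict_path v (subst \<sigma> m) (map w [0..<j'])"
proof -
  have "omega_eq_closed (subst \<sigma> m) (subst \<sigma> n)"
    using assms(1,2) unfolding omega_eq_def by blast
  then have "omega_ext {s. verdict_path v (subst \<sigma> m) s} = omega_ext {s. verdict_path v (subst \<sigma> n) s}"
    using assms(3) wtrace_iff_verdict_path[of v] unfolding omega_eq_closed_def La_def Lr_def by auto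
  with assms(4) show ?thesis by (auto simp: omega_ext_iff_prefix)
qed

definition pad_word :: "'a list \<Rightarrow> 'a \<Rightarrow> nat \<Rightarrow> 'a" where
  "pad_word s c i = (if i < length s then s ! i else c)"

lemma prefix_pad_word: "map (pad_word s c) [0..<j] = take j s @ replicate (j - length s) c"
  by (rule nth_equalityI) (auto simp: pad_word_def nth_append)

lemma verdict_path_pad_word:
  assumes "c \<notin> acts k" and "verdict_path v k (map (pad_word s c) [0..<j])"
  shows "verdict_path v k s"
proof (cases "j \<le> length s")
  case True
  with assms(2) show ?thesis
    using verdict_path_append[of v k "take j s" "drop j s"] by (simp add: prefix_pad_word)
next
  case False
  then obtain i where "j - length s = Suc i" using not0_implies_Suc by fastforce
  with False assms(2) have "verdict_path v k (s @ c # replicate i c)"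
    by (simp add: prefix_pad_word)
  with assms(1) show ?thesis by (rule verdict_path_before_fresh[rotated])
qed

lemma pad_word_prefix_fresh:
  assumes "c \<notin> set s" and "c \<notin> set u" and "map (pad_word s c) [0..<j] = u @ c # t"
  shows "u = s"
proof -
  have split: "take j s @ replicate (j - length s) c = u @ c # t"
    using assms(3) by (simp add: prefix_pad_word)
  have "\<forall>y\<in>set (take j s). y \<noteq> c" and "\<forall>y\<in>set u. y \<noteq> c"
    using assms(1,2) in_set_takeD by metis+
  moreover have "takeWhile (\<lambda>y. y \<noteq> c) (replicate k c) = []" for k
    by (cases k) simp_all
  ultimately have "takeWhile (\<lambda>y. y \<noteq> c) (take j s @ replicate (j - length s) c) = take j s"
    and "takeWhile (\<lambda>y. y \<noteq> c) (u @ c # t) = u"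
    by (simp_all add: takeWhile_append2)
  with split have "u = take j s" by simp
  with split have "replicate (j - length s) c = c # t" by simp
  then have "j > length s" by (cases "j - length s") auto
  with \<open>u = take j s\<close> show ?thesis by simp
qed

lemma verdict_path_transfer:
  fixes m n :: "('a,'x) mon"
  assumes "omega_eq m n" and "c \<notin> acts m" and "verdict_path v n s"
  shows "verdict_path v m s"
proof -
  define \<sigma> :: "'x \<Rightarrow> ('a,'x) mon" where "\<sigma> = (\<lambda>_. End)"
  have closed: "\<forall>x. closed (\<sigma> x)" by (simp add: \<sigma>_def closed_def)
  have "verdict_path v (subst \<sigma> n) (map (pad_word s c) [0..<length s])"
    using assms(3) by (simp add: prefix_pad_word verdict_path_subst)
  then obtain j where "verdict_path v (subst \<sigma> m) (map (pad_word s c) [0..<j])"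
    using omega_eq_prefix_transfer[OF assms(1) closed] verdict_path_imp_verdict[OF assms(3)]
    by blast
  then have "verdict_path v m (map (pad_word s c) [0..<j])"
    using verdict_path_substD by (fastforce simp: \<sigma>_def)
  with assms(2) show ?thesis by (rule verdict_path_pad_word)
qed

lemma var_path_transfer:
  fixes m n :: "('a,'x) mon"
  assumes "omega_eq m n" and "c \<notin> acts m" and "c \<notin> acts n" and "v = Yes \<or> v = No"
    and "var_path n x s" and "\<not> verdict_path v m s"
  shows "var_path m x s"
proof -
  \<comment> \<open>Only the instance of \<open>x\<close> can read the fresh action \<open>c\<close>.\<close>
  define \<sigma> :: "'x \<Rightarrow> ('a,'x) mon" where "\<sigma> = (\<lambda>y. if y = x then Pre c v else End)"
  have closed: "\<forall>x. closed (\<sigma> x)" using assms(4) by (auto simp: \<sigma>_def closed_def)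
  have "verdict_path v (subst \<sigma> n) (s @ [c])"
    using var_path_subst[OF assms(5)] assms(4) by (auto simp: \<sigma>_def)
  then have "verdict_path v (subst \<sigma> n) (map (pad_word s c) [0..<Suc (length s)])"
    by (simp add: prefix_pad_word pad_word_def)
  then obtain j where j: "verdict_path v (subst \<sigma> m) (map (pad_word s c) [0..<j])"
    using omega_eq_prefix_transfer[OF assms(1) closed assms(4)] by blast
  have "\<not> verdict_path v m (map (pad_word s c) [0..<j])"
    using assms(2,6) verdict_path_pad_word by metis
  with j obtain y u t where u: "map (pad_word s c) [0..<j] = u @ t" "var_path m y u"
    and t: "verdict_path v (\<sigma> y) t"
    using verdict_path_substD by blast
  from t have "y = x" and "\<exists>t'. t = c # t'"
    by (auto simp: \<sigma>_def split: if_splits elim: verdict_path.elims)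
  moreover have "c \<notin> set s" and "c \<notin> set u"
    using var_path_acts[OF assms(5)] var_path_acts[OF u(2)] assms(2,3) by blast+
  ultimately show ?thesis
    using u pad_word_prefix_fresh by metis
qed

lemma omega_eq_imp_absorbs:
  assumes "omega_eq m n" and "c \<notin> acts m" and "c \<notin> acts n"
  shows "absorbs m n"
proof (rule absorbs_if_paths_covered)
  show "verdict_path v m s" if "verdict_path v n s" for v s
    using verdict_path_transfer[OF assms(1,2) that] .
  show "var_path m x s \<or> verdict_path Yes m s \<and> verdict_path No m s" if "var_path n x s" for x s
    using var_path_transfer[OF assms _ that, of Yes] var_path_transfer[OF assms _ that, of No]
    by blast
qed

theorem mainTheorem10:
  fixes m n :: "('a, 'x) mon"
  assumes "infinite (UNIV :: 'a set)"
    and "omega_eq m n"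
  shows "Ev_derives m n"
proof -
  obtain c where "c \<notin> acts m \<union> acts n"
    using ex_new_if_finite[OF assms(1)] finite_acts by blast
  then have "absorbs m n" and "absorbs n m"
    using omega_eq_imp_absorbs[OF assms(2)] omega_eq_imp_absorbs[OF omega_eq_sym[OF assms(2)]]
    by blast+
  then show ?thesis by (rule absorbs_antisym)
qed

end
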